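(* Let $\{x^k\}$ be an infinite sequence generated by the MPG algorithm described in the context (i.e., the algorithm never stops), and suppose that for each $j=1,\ldots,m$ the gradient $\nabla G_j$ is Lipschitz continuous with constant $L_j>0$. Then there exists $c>0$ such that $$\theta_\alpha(x^k)\ge c\big(F_{j_k^*}(x^{k+1})-F_{j_k^*}(x^k)\big)\quad\text{for all } k\in\mathbb{N},$$ where $j_k^*\in\arg\max_{j=1,\ldots,m}\nabla G_j(x^k)^\top d^k$ is the index chosen in Step 3 of the algorithm.
   Context: Let $F:\mathbb{R}^n\to(\mathbb{R}\cup\{+\infty\})^m$, $F=(F_1,\ldots,F_m)$, with $F_j=G_j+H_j$ for $j=1,\ldots,m$, where: (i) each $G_j:\mathbb{R}^n\to\mathbb{R}$ is continuously differentiable and convex; (ii) each $H_j:\mathbb{R}^n\to\mathbb{R}\cup\{+\infty\}$ is proper, convex and continuous on its domain; (iii) $\mathrm{dom}(F):=\{x: F_j(x)<+\infty\ \forall j\}$ is nonempty and closed. For $u,v\in\mathbb{R}^m$, $u\preceq v$ means $u_j\le v_j$ for all $j$. For $x\in\mathrm{dom}(F)$ and $\alpha>0$ define $\psi_x(u):=\max_{j=1,\ldots,m}\big(\nabla G_j(x)^\top(u-x)+H_j(u)-H_j(x)\big)$, $p_\alpha(x):=\arg\min_{u\in\mathbb{R}^n}\psi_x(u)+\frac{1}{2\alpha}\|u-x\|^2$ (unique minimizer), and $\theta_\alpha(x):=\psi_x(p_\alpha(x))+\frac{1}{2\alpha}\|p_\alpha(x)-x\|^2$. MPG algorithm. Step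 0: choose $x^0\in\mathrm{dom}(F)$, $\alpha>0$, $\gamma\in(0,2/\alpha)$, $0<\tau_1<\tau_2<1$; set $k=0$. Step 1: compute $p^k:=p_\alpha(x^k)$ and $\theta_\alpha(x^k)$. Step 2: if $\theta_\alpha(x^k)=0$, stop. Step 3: set $d^k:=p^k-x^k$, take $j_k^*\in\arg\max_{j}\nabla G_j(x^k)^\top d^k$, set $t=1$. Step 3.1: if $G_{j_k^*}(x^k+td^k)\le G_{j_k^*}(x^k)+t\nabla G_{j_k^*}(x^k)^\top d^k+t\frac{\gamma}{2}\|d^k\|^2$, go to Step 3.2; otherwise replace $t$ by some value in $[\tau_1 t,\tau_2 t]$ and repeat Step 3.1. Step 3.2: if $F(x^k+td^k)\preceq F(x^k)$, set $t_k=t$ and go to Step 4. Step 3.3: replace $t$ by some value in $[\tau_1 t,\tau_2 t]$; if $G_j(x^k+td^k)\le G_j(x^k)+t\nabla G_j(x^k)^\top d^k+t\frac{\gamma}{2}\|d^k\|^2$ for all $j=1,\ldots,m$, set $t_k=t$ and go to Step 4; otherwise repeat Step 3.3. Step 4: $x^{k+1}:=x^k+t_kd^k$, $k\leftarrow k+1$, go to Step 1. *)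

theory Defs
  imports "HOL-Analysis.Analysis" "HOL-Library.Extended_Real"
begin

text \<open>Objectives are indexed by j in {1..m}. G j is the smooth part with gradient gradG j,
  H j the extended-real-valued nonsmooth part.\<close>

definition domE :: "('a \<Rightarrow> ereal) \<Rightarrow> 'a set" where
  "domE h = {x. h x < \<infinity>}"

text \<open>proper, convex, continuous on its domain (extended-valued convexity = convex domain and
  convexity of the finite restriction to the domain)\<close>
definition proper_convex_cont :: "('a::real_normed_vector \<Rightarrow> ereal) \<Rightarrow> bool" where
  "proper_convex_cont h \<longleftrightarrow> domE h \<noteq> {} \<and> (\<forall>x. h x \<noteq> -\<infinity>) \<and>
     convex (domE h) \<and> convex_on (domE h) (\<lambda>x. real_of_ereal (h x)) \<and>
     continuous_on (domE h) (\<lambda>x. real_of_ereal (h x))"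

definition Fobj :: "(nat \<Rightarrow> 'a \<Rightarrow> real) \<Rightarrow> (nat \<Rightarrow> 'a \<Rightarrow> ereal) \<Rightarrow> nat \<Rightarrow> 'a \<Rightarrow> ereal" where
  "Fobj G H j x = ereal (G j x) + H j x"

definition domF :: "(nat \<Rightarrow> 'a \<Rightarrow> real) \<Rightarrow> (nat \<Rightarrow> 'a \<Rightarrow> ereal) \<Rightarrow> nat \<Rightarrow> 'a set" where
  "domF G H m = {x. \<forall>j\<in>{1..m}. Fobj G H j x < \<infinity>}"

definition psi :: "(nat \<Rightarrow> 'a \<Rightarrow> 'a::real_inner) \<Rightarrow> (nat \<Rightarrow> 'a \<Rightarrow> ereal) \<Rightarrow> nat \<Rightarrow> 'a \<Rightarrow> 'a \<Rightarrow> ereal" where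
  "psi gradG H m x u = Max ((\<lambda>j. ereal (gradG j x \<bullet> (u - x)) + H j u - H j x) ` {1..m})"

definition p_alpha :: "(nat \<Rightarrow> 'a \<Rightarrow> 'a::real_inner) \<Rightarrow> (nat \<Rightarrow> 'a \<Rightarrow> ereal) \<Rightarrow> nat \<Rightarrow> real \<Rightarrow> 'a \<Rightarrow> 'a" where
  "p_alpha gradG H m \<alpha> x =
     (ARG_MIN (\<lambda>u. psi gradG H m x u + ereal (norm (u - x) ^ 2 / (2 * \<alpha>))) u. True)"

definition theta_alpha :: "(nat \<Rightarrow> 'a \<Rightarrow> 'a::real_inner) \<Rightarrow> (nat \<Rightarrow> 'a \<Rightarrow> ereal) \<Rightarrow> nat \<Rightarrow> real \<Rightarrow> 'a \<Rightarrow> ereal" where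
  "theta_alpha gradG H m \<alpha> x =
     psi gradG H m x (p_alpha gradG H m \<alpha> x) + ereal (norm (p_alpha gradG H m \<alpha> x - x) ^ 2 / (2 * \<alpha>))"

definition armijo :: "(nat \<Rightarrow> 'a \<Rightarrow> real) \<Rightarrow> (nat \<Rightarrow> 'a \<Rightarrow> 'a::real_inner) \<Rightarrow> real \<Rightarrow> nat \<Rightarrow> 'a \<Rightarrow> 'a \<Rightarrow> real \<Rightarrow> bool" where
  "armijo G gradG \<gamma> j x d t \<longleftrightarrow>
     G j (x + t *\<^sub>R d) \<le> G j x + t * (gradG j x \<bullet> d) + t * (\<gamma> / 2) * norm d ^ 2"

text \<open>Backtracking loop: test P t; if it holds stop with t, otherwise replace t by some
  value in [tau1 t, tau2 t] and repeat. bt P tau1 tau2 t t' means the loop started at t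
  can terminate with output t'.\<close>
inductive bt :: "(real \<Rightarrow> bool) \<Rightarrow> real \<Rightarrow> real \<Rightarrow> real \<Rightarrow> real \<Rightarrow> bool"
  for P :: "real \<Rightarrow> bool" and \<tau>1 \<tau>2 :: real where
  stop: "P t \<Longrightarrow> bt P \<tau>1 \<tau>2 t t"
| shrink: "\<not> P t \<Longrightarrow> \<tau>1 * t \<le> s \<Longrightarrow> s \<le> \<tau>2 * t \<Longrightarrow> bt P \<tau>1 \<tau>2 s t' \<Longrightarrow> bt P \<tau>1 \<tau>2 t t'"

definition mpg_linesearch ::
  "(nat \<Rightarrow> 'a \<Rightarrow> real) \<Rightarrow> (nat \<Rightarrow> 'a \<Rightarrow> 'a::real_inner) \<Rightarrow> (nat \<Rightarrow> 'a \<Rightarrow> ereal) \<Rightarrow> nat \<Rightarrow>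
   real \<Rightarrow> real \<Rightarrow> real \<Rightarrow> 'a \<Rightarrow> 'a \<Rightarrow> nat \<Rightarrow> real \<Rightarrow> bool" where
  "mpg_linesearch G gradG H m \<gamma> \<tau>1 \<tau>2 xk d j tk \<longleftrightarrow>
     (\<exists>t. bt (armijo G gradG \<gamma> j xk d) \<tau>1 \<tau>2 1 t \<and>
       (((\<forall>i\<in>{1..m}. Fobj G H i (xk + t *\<^sub>R d) \<le> Fobj G H i xk) \<and> tk = t) \<or>
        (\<not> (\<forall>i\<in>{1..m}. Fobj G H i (xk + t *\<^sub>R d) \<le> Fobj G H i xk) \<and>
         (\<exists>s. \<tau>1 * t \<le> s \<and> s \<le> \<tau>2 * t \<and>
            bt (\<lambda>r. \<forall>i\<in>{1..m}. armijo G gradG \<gamma> i xk d r) \<tau>1 \<tau>2 s tk))))"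

end

theory Submission
  imports Defs
begin

(* On the closed convex set D = dom F the subproblem objective u -> psi_x(u) + |u - x|^2/(2 alpha)
   is real valued, convex and coercive, so p = p_alpha(x) is a genuine minimiser lying in D.
   Comparing p with the points (1 - s) x + s p and letting s tend to 1 gives
   psi_x(p) <= -|p - x|^2/alpha, hence theta_alpha(x) <= 0.
   The descent lemma for the L_j-Lipschitz gradients makes every step t <= gamma / max L_j pass
   the Armijo test, so backtracking never returns a step below t_min = tau1 min(1, tau1 gamma / max L_j).
   Along the segment from x^k to p^k, the Armijo test for G_j and the convexity of H_j give
     F_j(x^(k+1)) - F_j(x^k) <= t_k (psi(p^k) + gamma/2 |d^k|^2) <= t_k (1 - alpha gamma/2) theta_alpha(x^k),
   and as theta_alpha(x^k) <= 0 and t_k >= t_min, the claim holds with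
   c = 1 / (t_min (1 - alpha gamma/2)). *)

section \<open>Backtracking and the Armijo test\<close>

lemma bt_lower_bound:
  assumes "bt P \<tau>1 \<tau>2 s t'" "0 < \<tau>1" "\<tau>2 \<le> 1" "0 < s" "0 < b"
    and small: "\<And>r. 0 < r \<Longrightarrow> r \<le> b \<Longrightarrow> P r"
  shows "P t' \<and> t' \<le> s \<and> min s (\<tau>1 * b) \<le> t'"
  using assms(1,4)
proof (induction rule: bt.induct)
  case (stop t)
  then show ?case by simp
next
  case (shrink t s t')
  have "b < t" using shrink(1,6) small by force
  have "0 < s" using shrink(2,6) \<open>0 < \<tau>1\<close> by (meson mult_pos_pos order_less_le_trans)
  with shrink.IH have IH: "P t' \<and> t' \<le> s \<and> min s (\<tau>1 * b) \<le> t'" .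
  have "\<tau>2 * t \<le> t" using \<open>\<tau>2 \<le> 1\<close> shrink(6) by (simp add: mult_le_cancel_right1)
  moreover have "\<tau>1 * b \<le> \<tau>1 * t" using \<open>b < t\<close> \<open>0 < \<tau>1\<close> by simp
  ultimately show ?case using IH shrink(2,3) by (auto simp: min_def split: if_splits)
qed

lemma mpg_linesearch_step_bounds:
  assumes ls: "mpg_linesearch G gradG H m \<gamma> \<tau>1 \<tau>2 x d j tk" and j: "j \<in> {1..m}"
    and \<tau>: "0 < \<tau>1" "\<tau>1 \<le> 1" "\<tau>2 \<le> 1" and "0 < b"
    and small: "\<And>i r. i \<in> {1..m} \<Longrightarrow> 0 < r \<Longrightarrow> r \<le> b \<Longrightarrow> armijo G gradG \<gamma> i x d r"
  shows "armijo G gradG \<gamma> j x d tk \<and> \<tau>1 * min 1 (\<tau>1 * b) \<le> tk \<and> tk \<le> 1"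
proof -
  obtain t where bt1: "bt (armijo G gradG \<gamma> j x d) \<tau>1 \<tau>2 1 t"
    and cases: "tk = t \<or> (\<exists>s. \<tau>1 * t \<le> s \<and> s \<le> \<tau>2 * t \<and>
                   bt (\<lambda>r. \<forall>i\<in>{1..m}. armijo G gradG \<gamma> i x d r) \<tau>1 \<tau>2 s tk)"
    using ls unfolding mpg_linesearch_def by blast
  have t: "armijo G gradG \<gamma> j x d t" "t \<le> 1" "min 1 (\<tau>1 * b) \<le> t"
    using bt_lower_bound[OF bt1] \<tau> \<open>0 < b\<close> small j by auto
  have "0 < min 1 (\<tau>1 * b)" using \<tau> \<open>0 < b\<close> by simp
  with t(3) have "0 < t" by linarith
  have low: "\<tau>1 * min 1 (\<tau>1 * b) \<le> min 1 (\<tau>1 * b)"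
    using \<tau> \<open>0 < b\<close> by (intro mult_left_le_one_le) auto
  from cases show ?thesis
  proof
    assume "tk = t"
    moreover have "\<tau>1 * min 1 (\<tau>1 * b) \<le> t" using low t(3) by (rule order_trans)
    ultimately show ?thesis using t(1,2) by blast
  next
    assume "\<exists>s. \<tau>1 * t \<le> s \<and> s \<le> \<tau>2 * t \<and>
              bt (\<lambda>r. \<forall>i\<in>{1..m}. armijo G gradG \<gamma> i x d r) \<tau>1 \<tau>2 s tk"
    then obtain s where s: "\<tau>1 * t \<le> s" "s \<le> \<tau>2 * t"
      and bt2: "bt (\<lambda>r. \<forall>i\<in>{1..m}. armijo G gradG \<gamma> i x d r) \<tau>1 \<tau>2 s tk"
      by blast
    have s_low: "\<tau>1 * min 1 (\<tau>1 * b) \<le> s"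
      using s(1) t(3) \<tau>(1) by (meson mult_left_mono less_imp_le order_trans)
    have "0 < \<tau>1 * t" using \<tau>(1) \<open>0 < t\<close> by simp
    with s(1) have "0 < s" by linarith
    then have tk: "\<forall>i\<in>{1..m}. armijo G gradG \<gamma> i x d tk" "tk \<le> s" "min s (\<tau>1 * b) \<le> tk"
      using bt_lower_bound[OF bt2] \<tau> \<open>0 < b\<close> small by auto
    have "\<tau>2 * t \<le> 1 * t" using \<tau>(3) \<open>0 < t\<close> by (intro mult_right_mono) auto
    with s(2) tk(2) t(2) have "tk \<le> 1" by linarith
    have "\<tau>1 * min 1 (\<tau>1 * b) \<le> \<tau>1 * b"
      using low min.cobounded2[of 1 "\<tau>1 * b"] by linarith
    with s_low have "\<tau>1 * min 1 (\<tau>1 * b) \<le> min s (\<tau>1 * b)" by simp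
    with tk(1,3) j \<open>tk \<le> 1\<close> show ?thesis by auto
  qed
qed

lemma lipschitz_gradient_quadratic_upper_bound:
  fixes g :: "'a::real_inner \<Rightarrow> real"
  assumes der: "\<And>y. (g has_derivative (\<lambda>h. gr y \<bullet> h)) (at y)"
    and lip: "\<And>y z. norm (gr y - gr z) \<le> L * norm (y - z)"
    and "0 \<le> r"
  shows "g (x + r *\<^sub>R d) \<le> g x + r * (gr x \<bullet> d) + L * r\<^sup>2 / 2 * norm d ^ 2"
proof -
  define h where "h s = g (x + s *\<^sub>R d) - g x - s * (gr x \<bullet> d) - L * s\<^sup>2 / 2 * norm d ^ 2" for s
  have dg: "((\<lambda>s. g (x + s *\<^sub>R d)) has_real_derivative (gr (x + s *\<^sub>R d) \<bullet> d)) (at s)" for s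
  proof -
    have "((\<lambda>s. x + s *\<^sub>R d) has_derivative (\<lambda>h. h *\<^sub>R d)) (at s)"
      by (auto intro!: derivative_eq_intros)
    from has_derivative_compose[OF this der]
    show ?thesis by (simp add: has_field_derivative_def inner_scaleR_right mult_commute_abs)
  qed
  have dh: "(h has_real_derivative (gr (x + s *\<^sub>R d) \<bullet> d - gr x \<bullet> d - L * s * norm d ^ 2)) (at s)"
    for s
    unfolding h_def by (rule derivative_eq_intros dg refl | simp)+
  have "h r \<le> h 0"
  proof (rule DERIV_nonpos_imp_nonincreasing[OF \<open>0 \<le> r\<close>])
    fix s assume s: "0 \<le> s" "s \<le> r"
    have "gr (x + s *\<^sub>R d) \<bullet> d - gr x \<bullet> d = (gr (x + s *\<^sub>R d) - gr x) \<bullet> d"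
      by (simp add: inner_diff_left)
    also have "\<dots> \<le> norm (gr (x + s *\<^sub>R d) - gr x) * norm d" by (rule norm_cauchy_schwarz)
    also have "\<dots> \<le> L * norm (s *\<^sub>R d) * norm d"
      using lip[of "x + s *\<^sub>R d" x] by (intro mult_right_mono) auto
    also have "\<dots> = L * s * norm d ^ 2" using s by (simp add: power2_eq_square)
    finally show "\<exists>y. (h has_real_derivative y) (at s) \<and> y \<le> 0" using dh by force
  qed
  then show ?thesis unfolding h_def by simp
qed

lemma armijo_of_lipschitz_gradient:
  assumes "\<And>y. (G j has_derivative (\<lambda>h. gradG j y \<bullet> h)) (at y)"
    and "\<And>y z. norm (gradG j y - gradG j z) \<le> L * norm (y - z)"
    and "0 \<le> t" "L * t \<le> \<gamma>"
  shows "armijo G gradG \<gamma> j x d t"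
proof -
  have "L * t * (t * norm d ^ 2 / 2) \<le> \<gamma> * (t * norm d ^ 2 / 2)"
    using assms(3,4) by (intro mult_right_mono) auto
  then have "L * t\<^sup>2 / 2 * norm d ^ 2 \<le> t * (\<gamma> / 2) * norm d ^ 2"
    by (simp add: power2_eq_square algebra_simps)
  with lipschitz_gradient_quadratic_upper_bound[OF assms(1,2,3), of x d] show ?thesis
    unfolding armijo_def by linarith
qed

lemma armijo_for_small_steps:
  assumes "finite J" "J \<noteq> {}" "0 < \<gamma>"
    and der: "\<And>j y. j \<in> J \<Longrightarrow> (G j has_derivative (\<lambda>h. gradG j y \<bullet> h)) (at y)"
    and lip: "\<And>j y z. j \<in> J \<Longrightarrow> norm (gradG j y - gradG j z) \<le> L j * norm (y - z)"
    and L_pos: "\<And>j. j \<in> J \<Longrightarrow> 0 < L j"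
  obtains b where "0 < b" "\<And>j x d t. j \<in> J \<Longrightarrow> 0 < t \<Longrightarrow> t \<le> b \<Longrightarrow> armijo G gradG \<gamma> j x d t"
proof
  define Lmax where "Lmax = Max (L ` J)"
  have L_le: "L j \<le> Lmax" if "j \<in> J" for j
    unfolding Lmax_def using that \<open>finite J\<close> by (intro Max_ge) auto
  have "0 < Lmax" using L_le L_pos \<open>J \<noteq> {}\<close> by force
  then show "0 < \<gamma> / Lmax" using \<open>0 < \<gamma>\<close> by simp
  fix j x d t assume j: "j \<in> J" and t: "0 < t" "t \<le> \<gamma> / Lmax"
  have "L j * t \<le> Lmax * (\<gamma> / Lmax)"
    using L_le[OF j] L_pos[OF j] t by (intro mult_mono) auto
  with \<open>0 < Lmax\<close> have "L j * t \<le> \<gamma>" by simp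
  with t show "armijo G gradG \<gamma> j x d t"
    by (intro armijo_of_lipschitz_gradient[where L = "L j"] der[OF j] lip[OF j]) auto
qed

section \<open>Proximal points of convex functions\<close>

lemma continuous_on_Max:
  fixes f :: "'i \<Rightarrow> 'a::topological_space \<Rightarrow> 'b::linorder_topology"
  assumes "finite A" "A \<noteq> {}" "\<And>j. j \<in> A \<Longrightarrow> continuous_on S (f j)"
  shows "continuous_on S (\<lambda>u. Max ((\<lambda>j. f j u) ` A))"
  using assms
proof (induction A rule: finite_ne_induct)
  case (insert j A)
  then have "continuous_on S (\<lambda>u. max (f j u) (Max ((\<lambda>j. f j u) ` A)))"
    by (intro continuous_on_max) auto
  with insert show ?case by simp
qed simp

lemma convex_on_Max:
  fixes f :: "'i \<Rightarrow> 'a::real_vector \<Rightarrow> real"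
  assumes "finite A" "A \<noteq> {}" "convex S" "\<And>j. j \<in> A \<Longrightarrow> convex_on S (f j)"
  shows "convex_on S (\<lambda>u. Max ((\<lambda>j. f j u) ` A))"
proof (rule convex_onI[OF _ \<open>convex S\<close>])
  fix t :: real and x y assume t: "0 < t" "t < 1" and xy: "x \<in> S" "y \<in> S"
  let ?M = "\<lambda>u. Max ((\<lambda>j. f j u) ` A)"
  have "f j ((1 - t) *\<^sub>R x + t *\<^sub>R y) \<le> (1 - t) * ?M x + t * ?M y" if "j \<in> A" for j
  proof -
    have "f j ((1 - t) *\<^sub>R x + t *\<^sub>R y) \<le> (1 - t) * f j x + t * f j y"
      using convex_onD[OF assms(4)[OF that]] t xy by simp
    also have "\<dots> \<le> (1 - t) * ?M x + t * ?M y"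
      using t that \<open>finite A\<close> by (intro add_mono mult_left_mono Max_ge) auto
    finally show ?thesis .
  qed
  then show "?M ((1 - t) *\<^sub>R x + t *\<^sub>R y) \<le> (1 - t) * ?M x + t * ?M y"
    using assms(1,2) by (subst Max_le_iff) auto
qed

lemma convex_on_linear_lower_bound:
  fixes g :: "'a::euclidean_space \<Rightarrow> real"
  assumes g: "convex_on S g" "continuous_on S g" and "closed S" "x \<in> S"
  obtains M where "0 \<le> M" "\<And>u. u \<in> S \<Longrightarrow> 1 \<le> norm (u - x) \<Longrightarrow> g x - M * norm (u - x) \<le> g u"
proof -
  have "compact (S \<inter> cball x 1)" using \<open>closed S\<close> by (intro closed_Int_compact) auto
  moreover have "S \<inter> cball x 1 \<noteq> {}" using \<open>x \<in> S\<close> by auto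
  moreover have "continuous_on (S \<inter> cball x 1) g" using g(2) by (rule continuous_on_subset) auto
  ultimately obtain w0 where "\<forall>w\<in>S \<inter> cball x 1. g w0 \<le> g w"
    using continuous_attains_inf by blast
  then obtain M where M: "0 \<le> M" "\<And>w. w \<in> S \<inter> cball x 1 \<Longrightarrow> g x - M \<le> g w"
    by (intro that[of "max 0 (g x - g w0)"]) force+
  show thesis
  proof (rule that[OF \<open>0 \<le> M\<close>])
    fix u assume u: "u \<in> S" "1 \<le> norm (u - x)"
    define r where "r = norm (u - x)"
    have r: "1 \<le> r" using u r_def by simp
    define w where "w = (1 - 1 / r) *\<^sub>R x + (1 / r) *\<^sub>R u"
    have "w \<in> S" unfolding w_def using convexD[OF convex_on_imp_convex[OF g(1)] \<open>x \<in> S\<close> u(1)] r by simp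
    moreover have "w - x = (1 / r) *\<^sub>R (u - x)" unfolding w_def by (simp add: algebra_simps)
    then have "norm (w - x) = 1" using r by (simp add: r_def[symmetric])
    ultimately have "g x - M \<le> g w" using M by (simp add: dist_norm norm_minus_commute)
    also have "\<dots> \<le> (1 - 1 / r) * g x + (1 / r) * g u"
      unfolding w_def using convex_onD[OF g(1), of "1 / r" x u] \<open>x \<in> S\<close> u(1) r by simp
    finally have "r * (g x - M) \<le> r * ((1 - 1 / r) * g x + (1 / r) * g u)"
      using r by simp
    with r show "g x - M * norm (u - x) \<le> g u" unfolding r_def[symmetric] by (simp add: algebra_simps)
  qed
qed

lemma proximal_point_exists:
  fixes g :: "'a::euclidean_space \<Rightarrow> real"
  assumes g: "convex_on S g" "continuous_on S g" and "closed S" "x \<in> S" "0 < \<alpha>"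
  obtains p where "p \<in> S"
    "\<And>u. u \<in> S \<Longrightarrow> g p + norm (p - x) ^ 2 / (2 * \<alpha>) \<le> g u + norm (u - x) ^ 2 / (2 * \<alpha>)"
proof -
  let ?\<phi> = "\<lambda>u. g u + norm (u - x) ^ 2 / (2 * \<alpha>)"
  obtain M where M: "0 \<le> M" "\<And>u. u \<in> S \<Longrightarrow> 1 \<le> norm (u - x) \<Longrightarrow> g x - M * norm (u - x) \<le> g u"
    using convex_on_linear_lower_bound[OF g \<open>closed S\<close> \<open>x \<in> S\<close>] by blast
  define R where "R = max 1 (2 * \<alpha> * M)"
  have far: "g x < ?\<phi> u" if u: "u \<in> S" "R < norm (u - x)" for u
  proof -
    define r where "r = norm (u - x)"
    have r: "1 < r" "2 * \<alpha> * M < r" using u unfolding r_def R_def by auto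
    then have "M < r / (2 * \<alpha>)" using \<open>0 < \<alpha>\<close> by (simp add: field_simps)
    then have "r * M < r * (r / (2 * \<alpha>))" using r by (intro mult_strict_left_mono) auto
    moreover have "g x - M * r \<le> g u" using M(2)[OF u(1)] r unfolding r_def by simp
    ultimately show ?thesis unfolding r_def[symmetric] by (simp add: power2_eq_square mult.commute)
  qed
  have "compact (S \<inter> cball x R)" using \<open>closed S\<close> by (intro closed_Int_compact) auto
  moreover have "x \<in> S \<inter> cball x R" using \<open>x \<in> S\<close> unfolding R_def by auto
  moreover have "continuous_on (S \<inter> cball x R) ?\<phi>"
    using g(2) \<open>0 < \<alpha>\<close> by (intro continuous_intros) (auto intro: continuous_on_subset)
  ultimately obtain p where p: "p \<in> S \<inter> cball x R" "\<forall>u\<in>S \<inter> cball x R. ?\<phi> p \<le> ?\<phi> u"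
    using continuous_attains_inf by blast
  then have "?\<phi> p \<le> g x" using \<open>x \<in> S\<close> \<open>x \<in> S \<inter> cball x R\<close> by force
  have "?\<phi> p \<le> ?\<phi> u" if "u \<in> S" for u
  proof (cases "norm (u - x) \<le> R")
    case True
    with p that show ?thesis by (simp add: dist_norm norm_minus_commute)
  next
    case False
    with far[OF that] \<open>?\<phi> p \<le> g x\<close> show ?thesis by linarith
  qed
  with p show thesis using that by blast
qed

lemma proximal_point_value_le:
  fixes g :: "'a::real_normed_vector \<Rightarrow> real"
  assumes g: "convex_on S g" "g x = 0" and "x \<in> S" "p \<in> S" "0 < \<alpha>"
    and minimal: "\<And>u. u \<in> S \<Longrightarrow> g p + norm (p - x) ^ 2 / (2 * \<alpha>) \<le> g u + norm (u - x) ^ 2 / (2 * \<alpha>)"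
  shows "g p \<le> - (norm (p - x) ^ 2 / \<alpha>)"
proof -
  define w where "w = norm (p - x) ^ 2 / (2 * \<alpha>)"
  have "g p \<le> - ((1 + s) * w)" if s: "0 < s" "s < 1" for s
  proof -
    define u where "u = (1 - s) *\<^sub>R x + s *\<^sub>R p"
    have "u - x = s *\<^sub>R (p - x)" unfolding u_def by (simp add: algebra_simps)
    then have "norm (u - x) ^ 2 / (2 * \<alpha>) = s\<^sup>2 * w"
      unfolding w_def using s by (simp add: power_mult_distrib)
    moreover have "g u \<le> s * g p"
      unfolding u_def using convex_onD[OF g(1), of s x p] s \<open>x \<in> S\<close> \<open>p \<in> S\<close> g(2) by simp
    moreover have "u \<in> S"
      unfolding u_def using convexD[OF convex_on_imp_convex[OF g(1)] \<open>x \<in> S\<close> \<open>p \<in> S\<close>] s by simp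
    ultimately have "g p + w \<le> s * g p + s\<^sup>2 * w" using minimal unfolding w_def by fastforce
    then have "(1 - s) * g p \<le> (1 - s) * (- ((1 + s) * w))"
      by (simp add: algebra_simps power2_eq_square)
    with s show ?thesis by (subst (asm) mult_le_cancel_left_pos) auto
  qed
  then have "eventually (\<lambda>s. g p \<le> - ((1 + s) * w)) (at_left 1)"
    using eventually_at_left_real[of 0 1] by (auto elim: eventually_mono)
  moreover have "((\<lambda>s. - ((1 + s) * w)) \<longlongrightarrow> - ((1 + 1) * w)) (at_left 1)"
    by (intro tendsto_intros)
  ultimately have "g p \<le> - (2 * w)" by (intro tendsto_lowerbound) auto
  with \<open>0 < \<alpha>\<close> show ?thesis unfolding w_def by simp
qed

section \<open>The MPG subproblem\<close>

locale mpg_problem =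
  fixes G :: "nat \<Rightarrow> 'a::euclidean_space \<Rightarrow> real"
    and gradG :: "nat \<Rightarrow> 'a \<Rightarrow> 'a"
    and H :: "nat \<Rightarrow> 'a \<Rightarrow> ereal"
    and m :: nat and \<alpha> :: real
  assumes m_pos: "1 \<le> m"
    and H_proper_convex_cont: "\<And>j. j \<in> {1..m} \<Longrightarrow> proper_convex_cont (H j)"
    and domF_closed: "closed (domF G H m)"
    and alpha_pos: "0 < \<alpha>"
begin

abbreviation "D \<equiv> domF G H m"
abbreviation "prox x \<equiv> p_alpha gradG H m \<alpha> x"

(* Junk outside D, where real_of_ereal sends \<infinity> to 0; it is only ever used on D. *)
definition "H_real j u = real_of_ereal (H j u)"

definition "psi_real x u = Max ((\<lambda>j. gradG j x \<bullet> (u - x) + H_real j u - H_real j x) ` {1..m})"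

definition "theta_real x = psi_real x (prox x) + norm (prox x - x) ^ 2 / (2 * \<alpha>)"

lemma domF_eq_Inter_domE: "D = (\<Inter>j\<in>{1..m}. domE (H j))"
  unfolding domF_def domE_def Fobj_def by auto

lemma H_eq_H_real:
  assumes "j \<in> {1..m}" "u \<in> D" shows "H j u = ereal (H_real j u)"
proof -
  have "H j u \<noteq> -\<infinity>" using H_proper_convex_cont[OF assms(1)] by (simp add: proper_convex_cont_def)
  moreover have "H j u < \<infinity>" using assms domF_eq_Inter_domE by (auto simp: domE_def)
  ultimately show ?thesis unfolding H_real_def by (cases "H j u") auto
qed

lemma Fobj_eq: "j \<in> {1..m} \<Longrightarrow> u \<in> D \<Longrightarrow> Fobj G H j u = ereal (G j u + H_real j u)"
  by (simp add: Fobj_def H_eq_H_real)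

lemma H_proper_convex_contD:
  assumes "j \<in> {1..m}"
  shows "convex (domE (H j))" "convex_on (domE (H j)) (H_real j)"
    and "continuous_on (domE (H j)) (H_real j)"
  using H_proper_convex_cont[OF assms] unfolding proper_convex_cont_def H_real_def[abs_def] by auto

lemma convex_domF: "convex D"
  unfolding domF_eq_Inter_domE by (rule convex_INT) (rule H_proper_convex_contD)

lemma domF_subset: "j \<in> {1..m} \<Longrightarrow> D \<subseteq> domE (H j)"
  unfolding domF_eq_Inter_domE by blast

lemma H_real_convex: "j \<in> {1..m} \<Longrightarrow> convex_on D (H_real j)"
  using convex_on_subset[OF H_proper_convex_contD(2) domF_subset convex_domF] .

lemma H_real_continuous: "j \<in> {1..m} \<Longrightarrow> continuous_on D (H_real j)"
  using continuous_on_subset[OF H_proper_convex_contD(3) domF_subset] .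

lemma psi_real_convex: "convex_on D (psi_real x)"
  unfolding psi_real_def
proof (intro convex_on_Max convex_domF)
  fix j assume j: "j \<in> {1..m}"
  have "convex_on D (\<lambda>u. gradG j x \<bullet> (u - x) - H_real j x)"
    by (rule convex_onI[OF _ convex_domF]) (simp add: algebra_simps inner_add_right inner_diff_right)
  from convex_on_add[OF this H_real_convex[OF j]]
  show "convex_on D (\<lambda>u. gradG j x \<bullet> (u - x) + H_real j u - H_real j x)"
    by (simp add: algebra_simps)
qed (use m_pos in auto)

lemma psi_real_continuous: "continuous_on D (psi_real x)"
  unfolding psi_real_def using m_pos H_real_continuous
  by (intro continuous_on_Max continuous_intros) auto

lemma psi_real_ge: "j \<in> {1..m} \<Longrightarrow> gradG j x \<bullet> (u - x) + H_real j u - H_real j x \<le> psi_real x u"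
  unfolding psi_real_def by (intro Max_ge) auto

lemma psi_real_self: "psi_real x x = 0"
proof -
  have "(\<lambda>j. gradG j x \<bullet> (x - x) + H_real j x - H_real j x) ` {1..m} = {0}"
    using m_pos by auto
  then show ?thesis unfolding psi_real_def by simp
qed

lemma psi_eq_psi_real:
  assumes "x \<in> D" "u \<in> D" shows "psi gradG H m x u = ereal (psi_real x u)"
proof -
  have "(\<lambda>j. ereal (gradG j x \<bullet> (u - x)) + H j u - H j x) ` {1..m}
      = ereal ` (\<lambda>j. gradG j x \<bullet> (u - x) + H_real j u - H_real j x) ` {1..m}"
    using assms by (auto simp: H_eq_H_real image_iff)
  with m_pos show ?thesis
    unfolding psi_def psi_real_def by (simp add: mono_Max_commute mono_def)
qed

lemma psi_outside_domF:
  assumes "x \<in> D" "u \<notin> D" shows "psi gradG H m x u = \<infinity>"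
proof -
  obtain j where j: "j \<in> {1..m}" "H j u = \<infinity>" using assms(2) domF_eq_Inter_domE by (auto simp: domE_def)
  then have "ereal (gradG j x \<bullet> (u - x)) + H j u - H j x = \<infinity>"
    using H_eq_H_real[OF j(1) assms(1)] by simp
  with j(1) have "\<infinity> \<le> psi gradG H m x u"
    unfolding psi_def by (metis (no_types, lifting) Max_ge finite_atLeastAtMost finite_imageI image_eqI)
  then show ?thesis by simp
qed

lemma prox_minimizes:
  assumes "x \<in> D"
  shows "prox x \<in> D"
    and "\<And>u. u \<in> D \<Longrightarrow> psi_real x (prox x) + norm (prox x - x) ^ 2 / (2 * \<alpha>)
                          \<le> psi_real x u + norm (u - x) ^ 2 / (2 * \<alpha>)"
proof -
  define \<phi> where "\<phi> u = psi gradG H m x u + ereal (norm (u - x) ^ 2 / (2 * \<alpha>))" for u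
  have \<phi>_in: "\<phi> u = ereal (psi_real x u + norm (u - x) ^ 2 / (2 * \<alpha>))" if "u \<in> D" for u
    unfolding \<phi>_def using psi_eq_psi_real[OF assms that] by simp
  have \<phi>_out: "\<phi> u = \<infinity>" if "u \<notin> D" for u
    unfolding \<phi>_def using psi_outside_domF[OF assms that] by simp
  obtain p where "p \<in> D"
    "\<And>u. u \<in> D \<Longrightarrow> psi_real x p + norm (p - x) ^ 2 / (2 * \<alpha>) \<le> psi_real x u + norm (u - x) ^ 2 / (2 * \<alpha>)"
    using proximal_point_exists[OF psi_real_convex psi_real_continuous domF_closed assms alpha_pos] by blast
  then have "\<phi> p \<le> \<phi> u" for u by (cases "u \<in> D") (auto simp: \<phi>_in \<phi>_out)
  then have "is_arg_min \<phi> (\<lambda>_. True) p" by (simp add: is_arg_min_def not_less)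
  then have "is_arg_min \<phi> (\<lambda>_. True) (prox x)"
    unfolding p_alpha_def arg_min_def \<phi>_def[symmetric] by (rule someI)
  then have le: "\<phi> (prox x) \<le> \<phi> u" for u by (simp add: is_arg_min_def not_less)
  show prox_in: "prox x \<in> D"
  proof (rule ccontr)
    assume "prox x \<notin> D"
    with le[of x] \<phi>_in[OF assms] \<phi>_out show False by simp
  qed
  show "psi_real x (prox x) + norm (prox x - x) ^ 2 / (2 * \<alpha>)
          \<le> psi_real x u + norm (u - x) ^ 2 / (2 * \<alpha>)" if "u \<in> D" for u
    using le[of u] \<phi>_in[OF that] \<phi>_in[OF prox_in] by simp
qed

lemma theta_alpha_eq: "x \<in> D \<Longrightarrow> theta_alpha gradG H m \<alpha> x = ereal (theta_real x)"
  unfolding theta_alpha_def theta_real_def by (simp add: psi_eq_psi_real prox_minimizes(1))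

lemma psi_real_prox_le:
  assumes "x \<in> D" shows "psi_real x (prox x) \<le> - (norm (prox x - x) ^ 2 / \<alpha>)"
  using proximal_point_value_le[OF psi_real_convex psi_real_self assms prox_minimizes(1)[OF assms]
      alpha_pos prox_minimizes(2)[OF assms]] .

lemma theta_real_nonpos:
  assumes "x \<in> D" shows "theta_real x \<le> 0"
proof -
  have "0 \<le> norm (prox x - x) ^ 2 / (2 * \<alpha>)" using alpha_pos by simp
  with psi_real_prox_le[OF assms] show ?thesis unfolding theta_real_def by simp
qed

lemma prox_segment_in_domF:
  assumes "x \<in> D" "0 \<le> t" "t \<le> 1" shows "x + t *\<^sub>R (prox x - x) \<in> D"
proof -
  have "x + t *\<^sub>R (prox x - x) = (1 - t) *\<^sub>R x + t *\<^sub>R prox x" by (simp add: algebra_simps)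
  with convexD[OF convex_domF assms(1) prox_minimizes(1)[OF assms(1)]] assms(2,3) show ?thesis
    by simp
qed

lemma armijo_step_decrease:
  assumes x: "x \<in> D" and j: "j \<in> {1..m}" and t: "0 \<le> t" "t \<le> 1"
    and \<gamma>: "0 \<le> \<gamma>" "\<alpha> * \<gamma> \<le> 2"
    and arm: "armijo G gradG \<gamma> j x (prox x - x) t"
  shows "G j (x + t *\<^sub>R (prox x - x)) + H_real j (x + t *\<^sub>R (prox x - x)) - (G j x + H_real j x)
         \<le> t * (1 - \<alpha> * \<gamma> / 2) * theta_real x"
proof -
  define p d q w b where "p = prox x" and "d = p - x" and "q = psi_real x p"
    and "w = norm d ^ 2 / (2 * \<alpha>)" and "b = \<alpha> * \<gamma> / 2"
  have p: "p \<in> D" unfolding p_def using prox_minimizes(1)[OF x] .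
  have G_step: "G j (x + t *\<^sub>R d) \<le> G j x + t * (gradG j x \<bullet> d) + t * (2 * (b * w))"
    using arm alpha_pos unfolding armijo_def d_def p_def w_def b_def by simp
  have H_step: "H_real j (x + t *\<^sub>R d) \<le> (1 - t) * H_real j x + t * H_real j p"
    using convex_onD[OF H_real_convex[OF j], of t x p] x p t unfolding d_def by (simp add: algebra_simps)
  have "gradG j x \<bullet> d + H_real j p - H_real j x \<le> q"
    using psi_real_ge[OF j] unfolding d_def q_def by simp
  then have "t * (gradG j x \<bullet> d + H_real j p - H_real j x) \<le> t * q"
    using t(1) by (rule mult_left_mono)
  with G_step H_step
  have "G j (x + t *\<^sub>R d) + H_real j (x + t *\<^sub>R d) - (G j x + H_real j x) \<le> t * (q + 2 * (b * w))"
    by (simp add: algebra_simps)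
  also have "\<dots> \<le> t * ((1 - b) * (q + w))"
  proof (rule mult_left_mono[OF _ t(1)])
    have "q \<le> - (2 * w)" using psi_real_prox_le[OF x] alpha_pos unfolding q_def w_def d_def p_def
      by (simp add: field_simps)
    then have "b * q \<le> b * (- (2 * w))"
      using \<gamma>(1) alpha_pos unfolding b_def by (intro mult_left_mono) auto
    moreover have "b * (- (2 * w)) = - (2 * (b * w))" by simp
    moreover have "b * w \<le> 1 * w" unfolding w_def b_def using \<gamma>(2) alpha_pos by (intro mult_right_mono) auto
    moreover have "(1 - b) * (q + w) = q + w - b * q - b * w" by (simp add: algebra_simps)
    ultimately show "q + 2 * (b * w) \<le> (1 - b) * (q + w)" by linarith
  qed
  finally show ?thesis unfolding theta_real_def d_def p_def q_def w_def b_def by (simp add: mult.assoc)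
qed

lemma theta_alpha_ge_scaled_decrease:
  assumes x: "x \<in> D" and j: "j \<in> {1..m}" and t: "0 < tmin" "tmin \<le> t" "t \<le> 1"
    and \<gamma>: "0 \<le> \<gamma>" "\<alpha> * \<gamma> < 2"
    and arm: "armijo G gradG \<gamma> j x (prox x - x) t"
  shows "ereal (1 / (tmin * (1 - \<alpha> * \<gamma> / 2))) * (Fobj G H j (x + t *\<^sub>R (prox x - x)) - Fobj G H j x)
         \<le> theta_alpha gradG H m \<alpha> x"
proof -
  define \<kappa> where "\<kappa> = 1 - \<alpha> * \<gamma> / 2"
  have "0 < \<kappa>" unfolding \<kappa>_def using \<gamma>(2) by simp
  let ?y = "x + t *\<^sub>R (prox x - x)"
  have "G j ?y + H_real j ?y - (G j x + H_real j x) \<le> t * \<kappa> * theta_real x"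
    unfolding \<kappa>_def using armijo_step_decrease[OF x j _ t(3) \<gamma>(1) _ arm] t \<gamma>(2) by simp
  also have "\<dots> \<le> tmin * \<kappa> * theta_real x"
    using theta_real_nonpos[OF x] t(2) \<open>0 < \<kappa>\<close> by (intro mult_right_mono_neg mult_right_mono) auto
  finally show ?thesis
    using t \<open>0 < \<kappa>\<close> x j prox_segment_in_domF[OF x, of t]
    by (simp add: theta_alpha_eq Fobj_eq field_simps flip: \<kappa>_def)
qed

end

theorem mainTheorem6:
  fixes G :: "nat \<Rightarrow> 'a::euclidean_space \<Rightarrow> real"
    and gradG :: "nat \<Rightarrow> 'a \<Rightarrow> 'a"
    and H :: "nat \<Rightarrow> 'a \<Rightarrow> ereal"
    and m :: nat and L :: "nat \<Rightarrow> real"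
    and \<alpha> \<gamma> \<tau>1 \<tau>2 :: real
    and x :: "nat \<Rightarrow> 'a" and jstar :: "nat \<Rightarrow> nat"
  assumes m_pos: "m \<ge> 1"
    and G_diff: "\<And>j y. j \<in> {1..m} \<Longrightarrow> (G j has_derivative (\<lambda>h. gradG j y \<bullet> h)) (at y)"
    and G_C1: "\<And>j. j \<in> {1..m} \<Longrightarrow> continuous_on UNIV (gradG j)"
    and G_convex: "\<And>j. j \<in> {1..m} \<Longrightarrow> convex_on UNIV (G j)"
    and H_prop: "\<And>j. j \<in> {1..m} \<Longrightarrow> proper_convex_cont (H j)"
    and dom_ne: "domF G H m \<noteq> {}"
    and dom_closed: "closed (domF G H m)"
    and alpha_pos: "\<alpha> > 0"
    and gamma: "0 < \<gamma>" "\<gamma> < 2 / \<alpha>"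
    and tau: "0 < \<tau>1" "\<tau>1 < \<tau>2" "\<tau>2 < 1"
    and x0: "x 0 \<in> domF G H m"
    and no_stop: "\<And>k. theta_alpha gradG H m \<alpha> (x k) \<noteq> 0"
    and jstar_mem: "\<And>k. jstar k \<in> {1..m}"
    and jstar_max: "\<And>k i. i \<in> {1..m} \<Longrightarrow>
           gradG i (x k) \<bullet> (p_alpha gradG H m \<alpha> (x k) - x k)
           \<le> gradG (jstar k) (x k) \<bullet> (p_alpha gradG H m \<alpha> (x k) - x k)"
    and step: "\<And>k. \<exists>tk. mpg_linesearch G gradG H m \<gamma> \<tau>1 \<tau>2 (x k)
                         (p_alpha gradG H m \<alpha> (x k) - x k) (jstar k) tk \<and>
                       x (Suc k) = x k + tk *\<^sub>R (p_alpha gradG H m \<alpha> (x k) - x k)"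
    and L_pos: "\<And>j. j \<in> {1..m} \<Longrightarrow> L j > 0"
    and lipschitz: "\<And>j y z. j \<in> {1..m} \<Longrightarrow> norm (gradG j y - gradG j z) \<le> L j * norm (y - z)"
  shows "\<exists>c>0. \<forall>k. theta_alpha gradG H m \<alpha> (x k)
                 \<ge> ereal c * (Fobj G H (jstar k) (x (Suc k)) - Fobj G H (jstar k) (x k))"
proof -
  interpret mpg_problem G gradG H m \<alpha>
    using m_pos H_prop dom_closed alpha_pos by unfold_locales
  obtain b where "0 < b" and small: "\<And>j y d r. j \<in> {1..m} \<Longrightarrow> 0 < r \<Longrightarrow> r \<le> b \<Longrightarrow> armijo G gradG \<gamma> j y d r"
    using armijo_for_small_steps[of "{1..m}" \<gamma> G gradG L] m_pos gamma(1) G_diff lipschitz L_pos by auto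
  define tmin where "tmin = \<tau>1 * min 1 (\<tau>1 * b)"
  define c where "c = 1 / (tmin * (1 - \<alpha> * \<gamma> / 2))"
  have "0 < tmin" using tau \<open>0 < b\<close> by (simp add: tmin_def)
  have "\<alpha> * \<gamma> < 2" using gamma alpha_pos by (simp add: field_simps)
  then have "0 < c" using \<open>0 < tmin\<close> by (simp add: c_def)
  have steps: "\<exists>t. armijo G gradG \<gamma> (jstar k) (x k) (prox (x k) - x k) t \<and> tmin \<le> t \<and> t \<le> 1 \<and>
                  x (Suc k) = x k + t *\<^sub>R (prox (x k) - x k)" for k
    using step[of k] mpg_linesearch_step_bounds[OF _ jstar_mem _ _ _ \<open>0 < b\<close> small] tau
    unfolding tmin_def by (meson less_imp_le order.strict_trans)
  have iterates: "x k \<in> D" for k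
  proof (induction k)
    case (Suc k)
    with steps[of k] \<open>0 < tmin\<close> prox_segment_in_domF show ?case by force
  qed (use x0 in simp)
  have "ereal c * (Fobj G H (jstar k) (x (Suc k)) - Fobj G H (jstar k) (x k))
        \<le> theta_alpha gradG H m \<alpha> (x k)" for k
  proof -
    obtain t where "armijo G gradG \<gamma> (jstar k) (x k) (prox (x k) - x k) t" "tmin \<le> t" "t \<le> 1"
      and "x (Suc k) = x k + t *\<^sub>R (prox (x k) - x k)"
      using steps by blast
    with theta_alpha_ge_scaled_decrease[OF iterates jstar_mem \<open>0 < tmin\<close>] gamma(1) \<open>\<alpha> * \<gamma> < 2\<close>
    show ?thesis unfolding c_def by simp
  qed
  with \<open>0 < c\<close> show ?thesis by blast
qed

end
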